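(* Every function $\pi_{3,5}$ has maximum distortion at least $3$.
   Context: For positive integers $n,k$, let $\mathcal S_{n,k}$ be the set of all multisets of size $n$ with elements from $[k]=\{1,\dots,k\}$. A function $\pi_{n,k}$ assigns to each $S\in\mathcal S_{n,k}$ a string $\pi_{n,k}(S)$ of length $n$ (positions indexed by $[n]$) whose letters, counted with multiplicity, form exactly the multiset $S$. For strings $X,Y$ of equal length, $d(X,Y)$ denotes their Hamming distance. For multisets $A,B$, the symmetric difference $A\oplus B$ is the multiset obtained by removing from $A$ and from $B$ their maximal common sub-multiset and taking the union of what remains. A pair $S,S'\in\mathcal S_{n,k}$ with $|S\oplus S'|=2$ has distortion $d(\pi_{n,k}(S),\pi_{n,k}(S'))$; the maximum distortion of $\pi_{n,k}$ is the maximum distortion over all such pairs. *)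

theory Defs
  imports Main "HOL-Library.Multiset"
begin

definition msets :: "nat \<Rightarrow> nat \<Rightarrow> nat multiset set" where
  "msets n k = {S. size S = n \<and> set_mset S \<subseteq> {1..k}}"

definition msym_diff :: "'a multiset \<Rightarrow> 'a multiset \<Rightarrow> 'a multiset" where
  "msym_diff A B = (A - (A \<inter># B)) + (B - (A \<inter># B))"

definition hamming :: "'a list \<Rightarrow> 'a list \<Rightarrow> nat" where
  "hamming X Y = card {i. i < length X \<and> X ! i \<noteq> Y ! i}"

text \<open>A valid function pi_{n,k}: maps each S in S_{n,k} to a string of length n whose
  letters (with multiplicity) form exactly S. Strings are lists; position i in [n]
  corresponds to list index i-1.\<close>
definition valid_pi :: "nat \<Rightarrow> nat \<Rightarrow> (nat multiset \<Rightarrow> nat list) \<Rightarrow> bool" where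
  "valid_pi n k pi \<longleftrightarrow> (\<forall>S \<in> msets n k. length (pi S) = n \<and> mset (pi S) = S)"

definition max_distortion :: "nat \<Rightarrow> nat \<Rightarrow> (nat multiset \<Rightarrow> nat list) \<Rightarrow> nat" where
  "max_distortion n k pi = Max {hamming (pi S) (pi S') | S S'.
      S \<in> msets n k \<and> S' \<in> msets n k \<and> size (msym_diff S S') = 2}"

end

theory Submission
  imports Defs "HOL-Combinatorics.Multiset_Permutations"
begin

text \<open>Already the ten 3-subsets of [5] force distortion 3. Two of them are adjacent when
  they share two elements, and distortion at most 2 then means that their orderings put a
  common element at the same position. Choosing the orderings one subset at a time and
  discarding every partial choice that violates this, no partial assignment survives all
  ten subsets.\<close>

lemma hamming_eq_length_filter [code]:
  "hamming X Y = length (filter (\<lambda>i. X ! i \<noteq> Y ! i) [0..<length X])"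
proof -
  have "{i. i < length X \<and> X ! i \<noteq> Y ! i} = set (filter (\<lambda>i. X ! i \<noteq> Y ! i) [0..<length X])"
    by auto
  then show ?thesis
    unfolding hamming_def by (metis distinct_card distinct_filter distinct_upt)
qed

lemma hamming_le_length: "hamming X Y \<le> length X"
  unfolding hamming_eq_length_filter by (metis length_filter_le length_upt minus_nat.diff_0)

lemma distortion_le_max_distortion:
  fixes pi :: "nat multiset \<Rightarrow> nat list"
  assumes pi: "valid_pi n k pi" and "S \<in> msets n k" "S' \<in> msets n k"
    and "size (msym_diff S S') = 2"
  shows "hamming (pi S) (pi S') \<le> max_distortion n k pi"
proof -
  let ?D = "{hamming (pi S) (pi S') | S S'.
      S \<in> msets n k \<and> S' \<in> msets n k \<and> size (msym_diff S S') = 2}"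
  have "?D \<subseteq> {..n}"
    using pi hamming_le_length by (fastforce simp: valid_pi_def)
  then have "finite ?D"
    by (rule finite_subset) simp
  moreover have "hamming (pi S) (pi S') \<in> ?D"
    using assms by blast
  ultimately show ?thesis
    unfolding max_distortion_def by (rule Max_ge)
qed

text \<open>A partial assignment is a list of pairs (word, ordering of the word); a word
  \<open>ws\<close> represents the multiset \<open>mset ws\<close>.\<close>

definition compatible_extensions ::
  "nat \<Rightarrow> ('a list \<times> 'a list) list \<Rightarrow> 'a list \<Rightarrow> ('a list \<times> 'a list) list list" where
  "compatible_extensions d A ws =
     [(ws, xs) # A. xs \<leftarrow> permutations_of_list_impl ws,
        list_all (\<lambda>(vs, ys). size (msym_diff (mset ws) (mset vs)) = 2 \<longrightarrow> hamming xs ys \<le> d) A]"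

definition low_distortion_assignments :: "nat \<Rightarrow> 'a list list \<Rightarrow> ('a list \<times> 'a list) list list" where
  "low_distortion_assignments d wss =
     foldr (\<lambda>ws As. concat (map (\<lambda>A. compatible_extensions d A ws) As)) wss [[]]"

lemma low_distortion_assignments_complete:
  assumes "\<forall>ws \<in> set wss. mset (f ws) = mset ws"
    and "\<forall>ws \<in> set wss. \<forall>vs \<in> set wss.
           size (msym_diff (mset ws) (mset vs)) = 2 \<longrightarrow> hamming (f ws) (f vs) \<le> d"
  shows "map (\<lambda>ws. (ws, f ws)) wss \<in> set (low_distortion_assignments d wss)"
  using assms
proof (induction wss)
  case Nil
  then show ?case
    by (simp add: low_distortion_assignments_def)
next
  case (Cons ws wss)
  let ?A = "map (\<lambda>vs. (vs, f vs)) wss"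
  have "?A \<in> set (low_distortion_assignments d wss)"
    using Cons by simp
  moreover have "f ws \<in> set (permutations_of_list_impl ws)"
    using Cons.prems(1)
    by (simp add: set_permutations_of_list_impl permutations_of_multiset_def)
  moreover have "list_all (\<lambda>(vs, ys).
      size (msym_diff (mset ws) (mset vs)) = 2 \<longrightarrow> hamming (f ws) ys \<le> d) ?A"
    using Cons.prems(2) by (simp add: list_all_iff)
  ultimately show ?case
    by (force simp: low_distortion_assignments_def compatible_extensions_def)
qed

lemma max_distortion_gt_if_no_low_distortion_assignments:
  fixes pi :: "nat multiset \<Rightarrow> nat list"
  assumes pi: "valid_pi n k pi" and wss: "\<forall>ws \<in> set wss. mset ws \<in> msets n k"
    and none: "low_distortion_assignments d wss = []"
  shows "d < max_distortion n k pi"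
proof (rule ccontr)
  assume "\<not> d < max_distortion n k pi"
  then have "\<forall>ws \<in> set wss. \<forall>vs \<in> set wss. size (msym_diff (mset ws) (mset vs)) = 2 \<longrightarrow>
      hamming (pi (mset ws)) (pi (mset vs)) \<le> d"
    using distortion_le_max_distortion[OF pi] wss by fastforce
  moreover have "\<forall>ws \<in> set wss. mset (pi (mset ws)) = mset ws"
    using pi wss by (simp add: valid_pi_def)
  ultimately show False
    using low_distortion_assignments_complete[of wss "\<lambda>ws. pi (mset ws)" d] none by simp
qed

theorem theorem3p1:
  fixes pi :: "nat multiset \<Rightarrow> nat list"
  assumes "valid_pi 3 5 pi"
  shows "max_distortion 3 5 pi \<ge> 3"
proof -
  let ?sets = "[[1,2,3], [1,2,4], [1,2,5], [1,3,4], [1,3,5],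
                [1,4,5], [2,3,4], [2,3,5], [2,4,5], [3,4,5]] :: nat list list"
  have "\<forall>ws \<in> set ?sets. mset ws \<in> msets 3 5"
    by (simp add: msets_def)
  moreover have "low_distortion_assignments 2 ?sets = []"
    by code_simp
  ultimately have "2 < max_distortion 3 5 pi"
    using assms by (rule max_distortion_gt_if_no_low_distortion_assignments[rotated])
  then show ?thesis
    by simp
qed

end
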